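(* Let $G$ be a graph with vertex set $V$ partitioned into $V_1,\dots,V_k$ with no edge inside any $V_i$, let $G'$, $X,Y,U$ be as constructed in the context, and let $S=V\cup X\cup U$, $T=V\cup Y\cup U$ and $\ell=8\binom{k}{2}+2k$. If $G$ contains a clique $\{v_1,\dots,v_k\}$ with $v_i\in V_i$ for all $i$, then there is a token sliding reconfiguration sequence of length at most $\ell$ from $S$ to $T$ in $G'$.
   Context: Construction of $G'$: start with $V$. For each edge $e=\{u,v\}$ of $G$ add a vertex $x_e$ adjacent to $u$ and $v$; let $E$ be the set of all $x_e$, and for each unordered pair $\{i,j\}$, $i\ne j$, let $\mathcal{E}_{ij}$ be the set of $x_e$ with $e$ joining $V_i$ and $V_j$; label these $\binom k2$ sets by $1,\dots,\binom k2$. Add independent sets $X=\{a_1,\dots,a_{\binom k2}\}$, $Y=\{b_1,\dots,b_{\binom k2}\}$. For each label $t$ and each $x_e$ in the set labeled $t$, add a path $a_t-p-q-r-x_e$ with three new internal vertices, putting the middle vertex $q$ into $U_1$, and a path $b_t-p'-q'-r'-x_e$ with three new internal vertices, putting $q'$ into $U_2$; $U=U_1\cup U_2$. For each $v\in V$ add a new vertex $z_v$ adjacent only to $v$. A token sliding reconfiguration sequence of length $m$ from $S$ to $T$ is a sequence $S=I_0,\dots,I_m=T$ of independent sets of size $|S|$ with each $I_{j+1}=(I_j\setminus\{u\})\cup\{w\}$ for some $u\in I_j$, $w\notin I_j$, $\{u,w\}\in E(G')$. *)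

theory Defs
  imports Main
begin

text \<open>Edge-subdivision vertex x_e is
  Ex e; the internal vertices of the path a_t - p - q - r - x_e are P1 e, Q1 e, R1 e;
  those of b_t - p' - q' - r' - x_e are P2 e, Q2 e, R2 e; a_t = A t, b_t = B t,
  z_v = Z v, and the original vertex v is Vx v.\<close>
datatype 'v gvert = Vx 'v | Ex "'v set" | A nat | B nat
  | P1 "'v set" | Q1 "'v set" | R1 "'v set"
  | P2 "'v set" | Q2 "'v set" | R2 "'v set" | Z 'v

definition part_pairs :: "nat \<Rightarrow> nat set set" where
  "part_pairs k = {{i, j} | i j. i \<in> {1..k} \<and> j \<in> {1..k} \<and> i \<noteq> j}"

text \<open>The graph G = (V, Ed) with partition given by part : V \<rightarrow> {1..k}
  (V_i = {v \<in> V. part v = i}).  An edge e joins V_i and V_j iff part ` e = {i,j}.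
  lab labels the pair sets by 1..(k choose 2).\<close>

definition G'_verts :: "'v set \<Rightarrow> 'v set set \<Rightarrow> nat \<Rightarrow> 'v gvert set" where
  "G'_verts V Ed k = Vx ` V \<union> Ex ` Ed \<union> A ` {1..k choose 2} \<union> B ` {1..k choose 2}
     \<union> P1 ` Ed \<union> Q1 ` Ed \<union> R1 ` Ed \<union> P2 ` Ed \<union> Q2 ` Ed \<union> R2 ` Ed \<union> Z ` V"

definition G'_edges :: "'v set \<Rightarrow> 'v set set \<Rightarrow> ('v \<Rightarrow> nat) \<Rightarrow> (nat set \<Rightarrow> nat)
     \<Rightarrow> 'v gvert set set" where
  "G'_edges V Ed part lab =
      {{Vx u, Ex e} | u e. e \<in> Ed \<and> u \<in> e}
    \<union> {{A (lab (part ` e)), P1 e} | e. e \<in> Ed}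
    \<union> {{P1 e, Q1 e} | e. e \<in> Ed}
    \<union> {{Q1 e, R1 e} | e. e \<in> Ed}
    \<union> {{R1 e, Ex e} | e. e \<in> Ed}
    \<union> {{B (lab (part ` e)), P2 e} | e. e \<in> Ed}
    \<union> {{P2 e, Q2 e} | e. e \<in> Ed}
    \<union> {{Q2 e, R2 e} | e. e \<in> Ed}
    \<union> {{R2 e, Ex e} | e. e \<in> Ed}
    \<union> {{Vx v, Z v} | v. v \<in> V}"

definition independent_in :: "'a set \<Rightarrow> 'a set set \<Rightarrow> 'a set \<Rightarrow> bool" where
  "independent_in VV EE I \<longleftrightarrow> I \<subseteq> VV \<and> (\<forall>u\<in>I. \<forall>w\<in>I. {u, w} \<notin> EE)"

definition ts_sequence :: "'a set \<Rightarrow> 'a set set \<Rightarrow> 'a set \<Rightarrow> 'a set \<Rightarrow> nat \<Rightarrow> bool" where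
  "ts_sequence VV EE S T m \<longleftrightarrow>
     (\<exists>I :: nat \<Rightarrow> 'a set. I 0 = S \<and> I m = T \<and>
        (\<forall>j\<le>m. independent_in VV EE (I j) \<and> card (I j) = card S) \<and>
        (\<forall>j<m. \<exists>u w. u \<in> I j \<and> w \<notin> I j \<and> {u, w} \<in> EE \<and>
                      I (Suc j) = (I j - {u}) \<union> {w}))"

end

theory Submission
  imports Defs
begin

(* First park the token of every clique vertex v_i on its pendant z_{v_i} (k slides).  Then
  the subdivision vertex x_e of every clique edge e has no token-carrying neighbour in V, so
  for each label t, with e the clique edge labelled t, four walks of two slides each move the
  token of a_t to b_t through the two paths at x_e:
  q_e -> r_e -> x_e, a_t -> p_e -> q_e, q'_e -> p'_e -> b_t and x_e -> r'_e -> q'_e.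
  Finally the k parked tokens return (the reverse of the first phase). *)

lemma ts_sequence_refl: "independent_in VV EE S \<Longrightarrow> ts_sequence VV EE S S 0"
  unfolding ts_sequence_def by (rule exI[of _ "\<lambda>_. S"]) simp

lemma ts_sequence_slide:
  assumes "finite S" "independent_in VV EE S" "independent_in VV EE (S - {u} \<union> {w})"
    and "u \<in> S" "w \<notin> S" "{u, w} \<in> EE"
  shows "ts_sequence VV EE S (S - {u} \<union> {w}) 1"
proof -
  have "card (S - {u} \<union> {w}) = Suc (card (S - {u}))"
    using assms(1,5) by simp
  also have "\<dots> = card S"
    using assms(1,4) by (rule card_Suc_Diff1)
  finally show ?thesis
    unfolding ts_sequence_def using assms
    by (intro exI[of _ "\<lambda>j. if j = 0 then S else S - {u} \<union> {w}"]) (auto simp: le_Suc_eq)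
qed

lemma ts_sequence_trans:
  assumes "ts_sequence VV EE S T m" "ts_sequence VV EE T R n"
  shows "ts_sequence VV EE S R (m + n)"
proof -
  obtain I where I: "I 0 = S" "I m = T"
    "\<forall>j\<le>m. independent_in VV EE (I j) \<and> card (I j) = card S"
    "\<forall>j<m. \<exists>u w. u \<in> I j \<and> w \<notin> I j \<and> {u, w} \<in> EE \<and> I (Suc j) = I j - {u} \<union> {w}"
    using assms(1) unfolding ts_sequence_def by blast
  obtain J where J: "J 0 = T" "J n = R"
    "\<forall>j\<le>n. independent_in VV EE (J j) \<and> card (J j) = card T"
    "\<forall>j<n. \<exists>u w. u \<in> J j \<and> w \<notin> J j \<and> {u, w} \<in> EE \<and> J (Suc j) = J j - {u} \<union> {w}"
    using assms(2) unfolding ts_sequence_def by blast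
  define K where "K j = (if j \<le> m then I j else J (j - m))" for j
  have K_late: "K j = J (j - m)" if "m \<le> j" for j
    using that I(2) J(1) by (auto simp: K_def)
  have "card T = card S"
    using I(2,3) by auto
  then have "independent_in VV EE (K j) \<and> card (K j) = card S" if "j \<le> m + n" for j
    using that I(3) J(3) K_late[of j] by (cases "j \<le> m") (auto simp: K_def)
  moreover have "\<exists>u w. u \<in> K j \<and> w \<notin> K j \<and> {u, w} \<in> EE \<and> K (Suc j) = K j - {u} \<union> {w}"
    if "j < m + n" for j
  proof (cases "j < m")
    case True
    then show ?thesis using I(4) by (simp add: K_def)
  next
    case False
    then show ?thesis
      using that J(4) K_late[of j] K_late[of "Suc j"] by (auto simp: Suc_diff_le)
  qed
  ultimately show ?thesis
    unfolding ts_sequence_def using I(1) J(2) K_late[of "m + n"]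
    by (intro exI[of _ K]) (simp add: K_def)
qed

lemma ts_sequence_sym:
  assumes "ts_sequence VV EE S T m"
  shows "ts_sequence VV EE T S m"
proof -
  obtain I where I: "I 0 = S" "I m = T"
    "\<forall>j\<le>m. independent_in VV EE (I j) \<and> card (I j) = card S"
    "\<forall>j<m. \<exists>u w. u \<in> I j \<and> w \<notin> I j \<and> {u, w} \<in> EE \<and> I (Suc j) = I j - {u} \<union> {w}"
    using assms unfolding ts_sequence_def by blast
  have "\<exists>u w. u \<in> I (m - j) \<and> w \<notin> I (m - j) \<and> {u, w} \<in> EE
      \<and> I (m - Suc j) = I (m - j) - {u} \<union> {w}" if "j < m" for j
  proof -
    obtain u w where "u \<in> I (m - Suc j)" "w \<notin> I (m - Suc j)" "{u, w} \<in> EE"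
        and step: "I (m - j) = I (m - Suc j) - {u} \<union> {w}"
    proof -
      have "m - Suc j < m" "Suc (m - Suc j) = m - j"
        using \<open>j < m\<close> by auto
      then show ?thesis
        using I(4) that by metis
    qed
    then show ?thesis
      by (intro exI[of _ w] exI[of _ u]) (auto simp: insert_commute)
  qed
  moreover have "card T = card S"
    using I(2,3) by auto
  ultimately show ?thesis
    unfolding ts_sequence_def using I
    by (intro exI[of _ "\<lambda>j. I (m - j)"]) auto
qed

lemma ts_sequence_walk:
  assumes "finite R"
    and "\<forall>y\<in>set (x # p). y \<notin> R \<and> independent_in VV EE (insert y R)"
    and "successively (\<lambda>u w. {u, w} \<in> EE) (x # p)"
  shows "ts_sequence VV EE (insert x R) (insert (last (x # p)) R) (length p)"
  using assms(2,3)
proof (induction p arbitrary: x)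
  case Nil
  then show ?case by (simp add: ts_sequence_refl)
next
  case (Cons y p)
  have "y \<noteq> x" \<comment> \<open>a loop {x, x} in EE would contradict independence of insert x R\<close>
    using Cons.prems unfolding independent_in_def by auto
  then have "ts_sequence VV EE (insert x R) (insert x R - {x} \<union> {y}) 1"
    using Cons.prems assms(1) by (intro ts_sequence_slide) (auto simp: insert_absorb)
  moreover have "insert x R - {x} \<union> {y} = insert y R"
    using Cons.prems by auto
  ultimately show ?case
    using ts_sequence_trans Cons by fastforce
qed

lemma G'_edges_gadget_path:
  assumes "e \<in> Ed"
  shows "{A (lab (part ` e)), P1 e} \<in> G'_edges V Ed part lab"
    and "{P1 e, Q1 e} \<in> G'_edges V Ed part lab"
    and "{Q1 e, R1 e} \<in> G'_edges V Ed part lab"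
    and "{R1 e, Ex e} \<in> G'_edges V Ed part lab"
    and "{Ex e, R2 e} \<in> G'_edges V Ed part lab"
    and "{R2 e, Q2 e} \<in> G'_edges V Ed part lab"
    and "{Q2 e, P2 e} \<in> G'_edges V Ed part lab"
    and "{P2 e, B (lab (part ` e))} \<in> G'_edges V Ed part lab"
  using assms by (auto simp: G'_edges_def doubleton_eq_iff)

lemma G'_edges_pendant: "v \<in> V \<Longrightarrow> {Vx v, Z v} \<in> G'_edges V Ed part lab"
  by (auto simp: G'_edges_def doubleton_eq_iff)

lemma independent_in_G'I:
  assumes "I \<subseteq> G'_verts V Ed k"
    and "\<And>e u. e \<in> Ed \<Longrightarrow> u \<in> e \<Longrightarrow> Vx u \<in> I \<Longrightarrow> Ex e \<notin> I"
    and "\<And>e. e \<in> Ed \<Longrightarrow> A (lab (part ` e)) \<in> I \<Longrightarrow> P1 e \<notin> I"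
    and "\<And>e. e \<in> Ed \<Longrightarrow> P1 e \<in> I \<Longrightarrow> Q1 e \<notin> I"
    and "\<And>e. e \<in> Ed \<Longrightarrow> Q1 e \<in> I \<Longrightarrow> R1 e \<notin> I"
    and "\<And>e. e \<in> Ed \<Longrightarrow> R1 e \<in> I \<Longrightarrow> Ex e \<notin> I"
    and "\<And>e. e \<in> Ed \<Longrightarrow> B (lab (part ` e)) \<in> I \<Longrightarrow> P2 e \<notin> I"
    and "\<And>e. e \<in> Ed \<Longrightarrow> P2 e \<in> I \<Longrightarrow> Q2 e \<notin> I"
    and "\<And>e. e \<in> Ed \<Longrightarrow> Q2 e \<in> I \<Longrightarrow> R2 e \<notin> I"
    and "\<And>e. e \<in> Ed \<Longrightarrow> R2 e \<in> I \<Longrightarrow> Ex e \<notin> I"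
    and "\<And>v. v \<in> V \<Longrightarrow> Vx v \<in> I \<Longrightarrow> Z v \<notin> I"
  shows "independent_in (G'_verts V Ed k) (G'_edges V Ed part lab) I"
  unfolding independent_in_def
proof (intro conjI ballI notI)
  fix x y
  assume "x \<in> I" "y \<in> I" "{x, y} \<in> G'_edges V Ed part lab"
  then show False
    using assms(2-) unfolding G'_edges_def by (auto simp: doubleton_eq_iff)
qed (use assms(1) in blast)

locale multicoloured_clique =
  fixes V :: "'v set" and Ed :: "'v set set" and part :: "'v \<Rightarrow> nat"
    and k :: nat and lab :: "nat set \<Rightarrow> nat" and c :: "nat \<Rightarrow> 'v"
  assumes finite_V: "finite V"
    and finite_Ed: "finite Ed"
    and labels_onto: "{1..k choose 2} \<subseteq> lab ` part_pairs k"
    and clique_in_parts: "\<And>i. i \<in> {1..k} \<Longrightarrow> c i \<in> V \<and> part (c i) = i"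
    and clique_adjacent:
      "\<And>i j. i \<in> {1..k} \<Longrightarrow> j \<in> {1..k} \<Longrightarrow> i \<noteq> j \<Longrightarrow> {c i, c j} \<in> Ed"
begin

abbreviation "verts_G' \<equiv> G'_verts V Ed k"
abbreviation "edges_G' \<equiv> G'_edges V Ed part lab"

definition clique_verts :: "'v set" where
  "clique_verts = c ` {1..k}"

definition clique_edge :: "nat \<Rightarrow> 'v set" where
  "clique_edge t = c ` inv_into (part_pairs k) lab t"

(* The tokens of D are parked on their pendants, and the labels below t have already
  been transferred from X to Y. *)
definition config :: "'v set \<Rightarrow> nat \<Rightarrow> 'v gvert set" where
  "config D t =
    Vx ` (V - D) \<union> Z ` D \<union> A ` {t..k choose 2} \<union> B ` {1..<t} \<union> Q1 ` Ed \<union> Q2 ` Ed"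

definition frozen_tokens :: "nat \<Rightarrow> 'v gvert set" where
  "frozen_tokens t = Vx ` (V - clique_verts) \<union> Z ` clique_verts
    \<union> A ` {Suc t..k choose 2} \<union> B ` {1..<t}
    \<union> Q1 ` (Ed - {clique_edge t}) \<union> Q2 ` (Ed - {clique_edge t})"

lemma clique_verts_subset: "clique_verts \<subseteq> V"
  using clique_in_parts by (auto simp: clique_verts_def)

lemma card_clique_verts: "card clique_verts = k"
proof -
  have "inj_on c {1..k}"
    by (rule inj_onI) (metis clique_in_parts)
  then show ?thesis
    by (simp add: clique_verts_def card_image)
qed

lemma clique_edge:
  assumes "t \<in> {1..k choose 2}"
  shows "clique_edge t \<in> Ed" "clique_edge t \<subseteq> clique_verts" "lab (part ` clique_edge t) = t"
proof -
  obtain i j where ij: "inv_into (part_pairs k) lab t = {i, j}"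
    "i \<in> {1..k}" "j \<in> {1..k}" "i \<noteq> j"
    using inv_into_into[of t lab "part_pairs k"] assms labels_onto
    unfolding part_pairs_def by blast
  have "lab {i, j} = t"
    using f_inv_into_f[of t lab "part_pairs k"] assms labels_onto ij(1) by auto
  moreover have "clique_edge t = {c i, c j}"
    by (simp add: clique_edge_def ij(1))
  ultimately show "clique_edge t \<in> Ed" "clique_edge t \<subseteq> clique_verts"
    "lab (part ` clique_edge t) = t"
    using ij clique_adjacent clique_in_parts by (auto simp: clique_verts_def)
qed

lemma finite_config: "D \<subseteq> V \<Longrightarrow> finite (config D t)"
  using finite_V finite_Ed by (auto simp: config_def intro: finite_subset)

lemma independent_config:
  assumes "D \<subseteq> V" "1 \<le> t" "t \<le> Suc (k choose 2)"
  shows "independent_in verts_G' edges_G' (config D t)"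
  using assms by (intro independent_in_G'I) (auto simp: config_def G'_verts_def)

lemma ts_sequence_park:
  assumes "D \<subseteq> V" "1 \<le> t" "t \<le> Suc (k choose 2)"
  shows "ts_sequence verts_G' edges_G' (config {} t) (config D t) (card D)"
proof -
  have "finite D"
    using assms(1) finite_V finite_subset by blast
  then show ?thesis
    using assms
  proof (induction D rule: finite_induct)
    case empty
    then show ?case
      using independent_config by (simp add: ts_sequence_refl)
  next
    case (insert v D)
    have parked: "config (insert v D) t = config D t - {Vx v} \<union> {Z v}"
      using insert by (auto simp: config_def)
    have "Vx v \<in> config D t" "Z v \<notin> config D t"
      using insert by (auto simp: config_def)
    then have "ts_sequence verts_G' edges_G' (config D t) (config (insert v D) t) 1"
      unfolding parked using insert independent_config[of "insert v D" t, unfolded parked]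
      by (intro ts_sequence_slide finite_config independent_config G'_edges_pendant) auto
    moreover have "ts_sequence verts_G' edges_G' (config {} t) (config D t) (card D)"
      using insert by blast
    ultimately show ?case
      using insert ts_sequence_trans by fastforce
  qed
qed

lemma config_split:
  assumes "t \<in> {1..k choose 2}"
  shows "config clique_verts t = frozen_tokens t \<union> {A t, Q1 (clique_edge t), Q2 (clique_edge t)}"
    and "config clique_verts (Suc t) =
      frozen_tokens t \<union> {B t, Q1 (clique_edge t), Q2 (clique_edge t)}"
  using assms clique_edge(1)[OF assms] by (auto simp: config_def frozen_tokens_def)

lemma finite_frozen_tokens: "t \<in> {1..k choose 2} \<Longrightarrow> finite (frozen_tokens t)"
  using finite_config[OF clique_verts_subset, of t] config_split(1) by simp

lemma frozen_tokens_verts: "t \<in> {1..k choose 2} \<Longrightarrow> frozen_tokens t \<subseteq> verts_G'"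
  using clique_verts_subset by (auto simp: frozen_tokens_def G'_verts_def)

lemma frozen_tokens_avoid:
  assumes "t \<in> {1..k choose 2}"
  shows "A t \<notin> frozen_tokens t" "B t \<notin> frozen_tokens t"
    and "Q1 (clique_edge t) \<notin> frozen_tokens t" "Q2 (clique_edge t) \<notin> frozen_tokens t"
    and "P1 x \<notin> frozen_tokens t" "R1 x \<notin> frozen_tokens t" "Ex x \<notin> frozen_tokens t"
    and "R2 x \<notin> frozen_tokens t" "P2 x \<notin> frozen_tokens t"
    and "u \<in> clique_edge t \<Longrightarrow> Vx u \<notin> frozen_tokens t"
    and "\<not> (Vx v \<in> frozen_tokens t \<and> Z v \<in> frozen_tokens t)"
  using clique_edge(2)[OF assms] by (auto simp: frozen_tokens_def)

lemma ts_sequence_transfer_label: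
  assumes t: "t \<in> {1..k choose 2}"
  shows "ts_sequence verts_G' edges_G' (config clique_verts t) (config clique_verts (Suc t)) 8"
proof -
  define e where "e = clique_edge t"
  define R where "R = frozen_tokens t"
  have walk: "ts_sequence verts_G' edges_G' S S' 2"
    if "S = R \<union> insert x M" "S' = R \<union> insert z M"
      "{x, y} \<in> edges_G'" "{y, z} \<in> edges_G'" "finite M"
      "\<forall>v\<in>{x, y, z}. v \<notin> R \<union> M \<and> independent_in verts_G' edges_G' (R \<union> insert v M)"
    for S S' x y z M
    using ts_sequence_walk[of "R \<union> M" x "[y, z]" verts_G' edges_G'] that
      finite_frozen_tokens[OF t]
    by (simp add: R_def numeral_2_eq_2)
  have e: "e \<in> Ed" "lab (part ` e) = t"
    "{A t, B t, P1 e, Q1 e, R1 e, Ex e, R2 e, Q2 e, P2 e} \<subseteq> verts_G'"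
    using clique_edge[OF t] t by (auto simp: e_def G'_verts_def)
  note facts = e G'_edges_gadget_path[OF e(1), where part = part and lab = lab, unfolded e(2)]
    frozen_tokens_verts[OF t, folded R_def] frozen_tokens_avoid[OF t, folded e_def R_def]
  have "ts_sequence verts_G' edges_G' (config clique_verts t) (R \<union> {A t, Ex e, Q2 e}) 2"
    by (rule walk[where x = "Q1 e" and y = "R1 e" and z = "Ex e" and M = "{A t, Q2 e}"])
      (use facts in \<open>auto simp: config_split[OF t, folded e_def R_def]
        intro!: independent_in_G'I\<close>)
  moreover have "ts_sequence verts_G' edges_G'
      (R \<union> {A t, Ex e, Q2 e}) (R \<union> {Q1 e, Ex e, Q2 e}) 2"
    by (rule walk[where x = "A t" and y = "P1 e" and z = "Q1 e" and M = "{Ex e, Q2 e}"])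
      (use facts in \<open>auto intro!: independent_in_G'I\<close>)
  moreover have "ts_sequence verts_G' edges_G'
      (R \<union> {Q1 e, Ex e, Q2 e}) (R \<union> {Q1 e, Ex e, B t}) 2"
    by (rule walk[where x = "Q2 e" and y = "P2 e" and z = "B t" and M = "{Q1 e, Ex e}"])
      (use facts in \<open>auto intro!: independent_in_G'I\<close>)
  moreover have "ts_sequence verts_G' edges_G'
      (R \<union> {Q1 e, Ex e, B t}) (config clique_verts (Suc t)) 2"
    by (rule walk[where x = "Ex e" and y = "R2 e" and z = "Q2 e" and M = "{Q1 e, B t}"])
      (use facts in \<open>auto simp: config_split[OF t, folded e_def R_def]
        intro!: independent_in_G'I\<close>)
  ultimately have "ts_sequence verts_G' edges_G'
      (config clique_verts t) (config clique_verts (Suc t)) (2 + 2 + 2 + 2)"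
    by (blast intro: ts_sequence_trans)
  then show ?thesis
    by simp
qed

lemma ts_sequence_transfer_labels:
  "t \<le> k choose 2 \<Longrightarrow>
    ts_sequence verts_G' edges_G' (config clique_verts 1) (config clique_verts (Suc t)) (8 * t)"
proof (induction t)
  case 0
  then show ?case
    using independent_config[OF clique_verts_subset] by (simp add: ts_sequence_refl)
next
  case (Suc t)
  then show ?case
    using ts_sequence_trans[OF Suc.IH ts_sequence_transfer_label[of "Suc t"]]
    by (simp add: add.commute)
qed

lemma ts_sequence_X_to_Y:
  "ts_sequence verts_G' edges_G'
     (Vx ` V \<union> A ` {1..k choose 2} \<union> (Q1 ` Ed \<union> Q2 ` Ed))
     (Vx ` V \<union> B ` {1..k choose 2} \<union> (Q1 ` Ed \<union> Q2 ` Ed)) (8 * (k choose 2) + 2 * k)"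
proof -
  have "ts_sequence verts_G' edges_G' (config {} 1) (config {} (Suc (k choose 2)))
      (card clique_verts + 8 * (k choose 2) + card clique_verts)"
    using ts_sequence_trans[OF ts_sequence_trans
        [OF ts_sequence_park[OF clique_verts_subset] ts_sequence_transfer_labels[OF order_refl]]
        ts_sequence_sym[OF ts_sequence_park[OF clique_verts_subset]]]
    by simp
  moreover have "config {} 1 = Vx ` V \<union> A ` {1..k choose 2} \<union> (Q1 ` Ed \<union> Q2 ` Ed)"
    and "config {} (Suc (k choose 2)) = Vx ` V \<union> B ` {1..k choose 2} \<union> (Q1 ` Ed \<union> Q2 ` Ed)"
    by (auto simp: config_def)
  ultimately show ?thesis
    by (simp add: card_clique_verts add.commute)
qed

end

theorem lemma5p2:
  fixes V :: "'v set" and Ed :: "'v set set" and part :: "'v \<Rightarrow> nat"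
    and k :: nat and lab :: "nat set \<Rightarrow> nat"
  assumes finV: "finite V"
    and edges: "\<forall>e\<in>Ed. \<exists>u v. u \<in> V \<and> v \<in> V \<and> u \<noteq> v \<and> e = {u, v}"
    and part_range: "\<forall>v\<in>V. part v \<in> {1..k}"
    and no_inner: "\<forall>u v. {u, v} \<in> Ed \<longrightarrow> part u \<noteq> part v"
    and lab_bij: "bij_betw lab (part_pairs k) {1..k choose 2}"
    and clique: "\<exists>c :: nat \<Rightarrow> 'v. (\<forall>i\<in>{1..k}. c i \<in> V \<and> part (c i) = i) \<and>
                   (\<forall>i\<in>{1..k}. \<forall>j\<in>{1..k}. i \<noteq> j \<longrightarrow> {c i, c j} \<in> Ed)"
  shows "\<exists>m \<le> 8 * (k choose 2) + 2 * k.
           ts_sequence (G'_verts V Ed k) (G'_edges V Ed part lab)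
             (Vx ` V \<union> A ` {1..k choose 2} \<union> (Q1 ` Ed \<union> Q2 ` Ed))
             (Vx ` V \<union> B ` {1..k choose 2} \<union> (Q1 ` Ed \<union> Q2 ` Ed)) m"
proof -
  obtain c :: "nat \<Rightarrow> 'v" where
    "\<forall>i\<in>{1..k}. c i \<in> V \<and> part (c i) = i"
    "\<forall>i\<in>{1..k}. \<forall>j\<in>{1..k}. i \<noteq> j \<longrightarrow> {c i, c j} \<in> Ed"
    using clique by blast
  moreover have "finite Ed"
  proof (rule finite_subset)
    show "Ed \<subseteq> Pow V"
      using edges by auto
  qed (use finV in simp)
  ultimately interpret multicoloured_clique V Ed part k lab c
    using finV bij_betw_imp_surj_on[OF lab_bij] by unfold_locales auto
  show ?thesis
    using ts_sequence_X_to_Y by blast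
qed

end
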